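(* Let $k$ be a field containing a primitive fourth root of unity $i$, and let $H_{\pm}(8)$ be the quasi-Hopf algebra described in the context, with dual basis $\{P_{g^ax^b}\mid 0\le a\le1,\ 0\le b\le 3\}$ of $H_\pm(8)^*$ corresponding to the basis $\{g^ax^b\}$. Then the space of left cointegrals on $H_{\pm}(8)$ is $kP_{x^3}$.
   Context: $H_{\pm}(8)$ is the unital algebra generated by $g,x$ with relations $g^2=1$, $x^4=0$, $gx=-xg$ (basis $g^ax^b$, $0\le a\le1$, $0\le b\le3$), with $\Delta(g)=g\otimes g$, $\varepsilon(g)=1$, $\Delta(x)=x\otimes(p_+\pm ip_-)+1\otimes p_+x+g\otimes p_-x$, $\varepsilon(x)=0$, where $p_\pm=\frac12(1\pm g)$; reassociator $\Phi=1\otimes1\otimes1-2p_-\otimes p_-\otimes p_-$, antipode $S(g)=g$, $S(x)=-x(p_+\pm ip_-)$, and $\alpha=g$, $\beta=1$. (Two quasi-Hopf algebras, one for each sign.) Its modular element $\mu$ satisfies $\mu(g)=-1$, $\mu(x)=0$. General definitions, for a finite dimensional quasi-Hopf algebra $(H,\Delta,\varepsilon,\Phi,S,\alpha,\beta)$ (axioms of Drinfeld: $(\mathrm{Id}\otimes\Delta)\Delta(h)=\Phi(\Delta\otimes\mathrm{Id})\Delta(h)\Phi^{-1}$, counit axioms, 3-cocycle condition for $\Phi$, $(\mathrm{Id}\otimes\varepsilon\otimes\mathrm{Id})(\Phi)=1\otimes1$, $S(h_1)\alpha h_2=\varepsilon(h)\alpha$, $h_1\beta S(h_2)=\varepsilon(h)\beta$,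 $X^1\beta S(X^2)\alpha X^3=1=S(x^1)\alpha x^2\beta S(x^3)$), with $\Delta(h)=h_1\otimes h_2$, $\Phi=X^1\otimes X^2\otimes X^3$, $\Phi^{-1}=x^1\otimes x^2\otimes x^3$: $\gamma=S(x^1X^2)\alpha x^2X^3_1\otimes S(X^1)\alpha x^3X^3_2$; $\delta=X^1_1x^1\beta S(X^3)\otimes X^1_2x^2\beta S(X^2x^3)$; $f=f^1\otimes f^2=(S\otimes S)(\Delta^{\rm op}(x^1))\gamma\Delta(x^2\beta S(x^3))$ with inverse $f^{-1}=g^1\otimes g^2=\Delta(S(x^1)\alpha x^2)\delta(S\otimes S)(\Delta^{\rm cop}(x^3))$; $p_R=p^1\otimes p^2=x^1\otimes x^2\beta S(x^3)$; $q_R=q^1\otimes q^2=X^1\otimes S^{-1}(\alpha X^3)X^2$; $U=g^1S(q^2)\otimes g^2S(q^1)$, $V=S^{-1}(f^2p^2)\otimes S^{-1}(f^1p^1)$. Left integrals: $ht=\varepsilon(h)t$ for all $h$. $\mu\in H^*$ is the algebra map with $th=\mu(h)t$ for left integrals $t$. A left cointegral is $\lambda\in H^*$ with $\lambda(V^2h_2U^2)V^1h_1U^1=\mu(x^1)\lambda(hS(x^2))x^3$ for all $h$. *)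

theory Defs
  imports Main "HOL-Library.Function_Algebras"
begin

text \<open>An element of H is its coefficient function on the basis g^a x^b, indexed by
  (a,b) in Bset = {0..1} x {0..3}, and vanishing outside Bset.
  Elements of H (x) H and H (x) H (x) H are coefficient functions on pairs / triples
  of basis indices. A functional l in H^* is given by its coordinates in the dual
  basis P_{g^a x^b}, i.e. l(h) = sum_p l p * h p.
  The parameter w stands for the element +i or -i (one quasi-Hopf algebra per sign).\<close>

type_synonym idx = "nat \<times> nat"
type_synonym 'k H1 = "idx \<Rightarrow> 'k"
type_synonym 'k H2 = "idx \<times> idx \<Rightarrow> 'k"
type_synonym 'k H3 = "idx \<times> idx \<times> idx \<Rightarrow> 'k"

definition Bset :: "idx set" where
  "Bset = {0..1} \<times> {0..3}"

definition Hel :: "('k::field) H1 set" where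
  "Hel = {h. \<forall>p. p \<notin> Bset \<longrightarrow> h p = 0}"

definition H3el :: "('k::field) H3 set" where
  "H3el = {t. \<forall>p q r. (p \<notin> Bset \<or> q \<notin> Bset \<or> r \<notin> Bset) \<longrightarrow> t (p, q, r) = 0}"

definition sc :: "'k::field \<Rightarrow> ('a \<Rightarrow> 'k) \<Rightarrow> ('a \<Rightarrow> 'k)" where
  "sc c f = (\<lambda>y. c * f y)"

text \<open>basis element g^a x^b, and also the dual basis element P_{g^a x^b}\<close>
definition bas :: "idx \<Rightarrow> ('k::field) H1" where
  "bas p = (\<lambda>q. if q = p then 1 else 0)"

text \<open>product of basis elements: g^a x^b g^c x^d = (-1)^(bc) g^(a+c) x^(b+d), x^4 = 0, g^2 = 1\<close>
definition bprod :: "idx \<Rightarrow> idx \<Rightarrow> ('k::field) H1" where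
  "bprod p q = (if snd p + snd q < 4
      then sc ((-1) ^ (snd p * fst q)) (bas ((fst p + fst q) mod 2, snd p + snd q))
      else 0)"

definition hmult :: "('k::field) H1 \<Rightarrow> 'k H1 \<Rightarrow> 'k H1" where
  "hmult u v = (\<Sum>p\<in>Bset. \<Sum>q\<in>Bset. sc (u p * v q) (bprod p q))"

definition hone :: "('k::field) H1" where "hone = bas (0,0)"
definition hg :: "('k::field) H1" where "hg = bas (1,0)"
definition hx :: "('k::field) H1" where "hx = bas (0,1)"

definition hprodl :: "('k::field) H1 list \<Rightarrow> 'k H1" where
  "hprodl xs = foldr hmult xs hone"

definition hpow :: "('k::field) H1 \<Rightarrow> nat \<Rightarrow> 'k H1" where
  "hpow u n = (hmult u ^^ n) hone"

definition pplus :: "('k::field) H1" where "pplus = sc (1/2) (hone + hg)"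
definition pminus :: "('k::field) H1" where "pminus = sc (1/2) (hone - hg)"

definition tens :: "('k::field) H1 \<Rightarrow> 'k H1 \<Rightarrow> 'k H2" where
  "tens u v = (\<lambda>(p, q). u p * v q)"

definition tens3 :: "('k::field) H1 \<Rightarrow> 'k H1 \<Rightarrow> 'k H1 \<Rightarrow> 'k H3" where
  "tens3 u v w = (\<lambda>(p, q, r). u p * v q * w r)"

definition hmult2 :: "('k::field) H2 \<Rightarrow> 'k H2 \<Rightarrow> 'k H2" where
  "hmult2 S T = (\<Sum>(p, q)\<in>Bset \<times> Bset. \<Sum>(p', q')\<in>Bset \<times> Bset.
      sc (S (p, q) * T (p', q')) (tens (bprod p p') (bprod q q')))"

definition hmult3 :: "('k::field) H3 \<Rightarrow> 'k H3 \<Rightarrow> 'k H3" where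
  "hmult3 S T = (\<Sum>(p, q, r)\<in>Bset \<times> Bset \<times> Bset. \<Sum>(p', q', r')\<in>Bset \<times> Bset \<times> Bset.
      sc (S (p, q, r) * T (p', q', r')) (tens3 (bprod p p') (bprod q q') (bprod r r')))"

definition hone2 :: "('k::field) H2" where "hone2 = tens hone hone"
definition hone3 :: "('k::field) H3" where "hone3 = tens3 hone hone hone"

definition hpow2 :: "('k::field) H2 \<Rightarrow> nat \<Rightarrow> 'k H2" where
  "hpow2 T n = (hmult2 T ^^ n) hone2"

text \<open>Sweedler-type sums: sum2 T F = T^1 ... T^2 (F bilinear), sum3 likewise\<close>
definition sum2 :: "('k::field) H2 \<Rightarrow> ('k H1 \<Rightarrow> 'k H1 \<Rightarrow> ('a \<Rightarrow> 'k)) \<Rightarrow> ('a \<Rightarrow> 'k)" where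
  "sum2 T F = (\<Sum>(p, q)\<in>Bset \<times> Bset. sc (T (p, q)) (F (bas p) (bas q)))"

definition sum3 :: "('k::field) H3 \<Rightarrow> ('k H1 \<Rightarrow> 'k H1 \<Rightarrow> 'k H1 \<Rightarrow> ('a \<Rightarrow> 'k)) \<Rightarrow> ('a \<Rightarrow> 'k)" where
  "sum3 T F = (\<Sum>(p, q, r)\<in>Bset \<times> Bset \<times> Bset. sc (T (p, q, r)) (F (bas p) (bas q) (bas r)))"

definition ev :: "('k::field) H1 \<Rightarrow> 'k H1 \<Rightarrow> 'k" where
  "ev l h = (\<Sum>p\<in>Bset. l p * h p)"

text \<open>comultiplication: algebra map determined by Delta(g), Delta(x)\<close>
definition Dg :: "('k::field) H2" where "Dg = tens hg hg"
definition Dx :: "('k::field) \<Rightarrow> 'k H2" where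
  "Dx w = tens hx (pplus + sc w pminus) + tens hone (hmult pplus hx) + tens hg (hmult pminus hx)"

definition Delta :: "('k::field) \<Rightarrow> 'k H1 \<Rightarrow> 'k H2" where
  "Delta w h = (\<Sum>p\<in>Bset. sc (h p) (hmult2 (hpow2 Dg (fst p)) (hpow2 (Dx w) (snd p))))"

definition counit :: "('k::field) H1 \<Rightarrow> 'k" where
  "counit h = h (0,0) + h (1,0)"

text \<open>antipode: anti-algebra map with S(g) = g, S(x) = -x(p_+ + w p_-)\<close>
definition Sx :: "('k::field) \<Rightarrow> 'k H1" where
  "Sx w = - hmult hx (pplus + sc w pminus)"

definition Santi :: "('k::field) \<Rightarrow> 'k H1 \<Rightarrow> 'k H1" where
  "Santi w h = (\<Sum>p\<in>Bset. sc (h p) (hmult (hpow (Sx w) (snd p)) (hpow hg (fst p))))"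

definition Sinv :: "('k::field) \<Rightarrow> 'k H1 \<Rightarrow> 'k H1" where
  "Sinv w h = (THE h'. h' \<in> Hel \<and> Santi w h' = h)"

definition halpha :: "('k::field) H1" where "halpha = hg"
definition hbeta :: "('k::field) H1" where "hbeta = hone"

definition Phi :: "('k::field) H3" where
  "Phi = hone3 - sc 2 (tens3 pminus pminus pminus)"

definition Phiinv :: "('k::field) H3" where
  "Phiinv = (THE y. y \<in> H3el \<and> hmult3 Phi y = hone3 \<and> hmult3 y Phi = hone3)"

definition gammaE :: "('k::field) \<Rightarrow> 'k H2" where
  "gammaE w = sum3 Phi (\<lambda>X1 X2 X3. sum3 Phiinv (\<lambda>x1 x2 x3. sum2 (Delta w X3) (\<lambda>y1 y2.
      tens (hprodl [Santi w (hmult x1 X2), halpha, x2, y1])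
           (hprodl [Santi w X1, halpha, x3, y2]))))"

definition deltaE :: "('k::field) \<Rightarrow> 'k H2" where
  "deltaE w = sum3 Phi (\<lambda>X1 X2 X3. sum3 Phiinv (\<lambda>x1 x2 x3. sum2 (Delta w X1) (\<lambda>y1 y2.
      tens (hprodl [y1, x1, hbeta, Santi w X3])
           (hprodl [y2, x2, hbeta, Santi w (hmult X2 x3)]))))"

definition SSDop :: "('k::field) \<Rightarrow> 'k H1 \<Rightarrow> 'k H2" where
  "SSDop w h = sum2 (Delta w h) (\<lambda>a b. tens (Santi w b) (Santi w a))"

definition fE :: "('k::field) \<Rightarrow> 'k H2" where
  "fE w = sum3 Phiinv (\<lambda>x1 x2 x3.
      hmult2 (hmult2 (SSDop w x1) (gammaE w)) (Delta w (hprodl [x2, hbeta, Santi w x3])))"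

definition finvE :: "('k::field) \<Rightarrow> 'k H2" where
  "finvE w = sum3 Phiinv (\<lambda>x1 x2 x3.
      hmult2 (hmult2 (Delta w (hprodl [Santi w x1, halpha, x2])) (deltaE w)) (SSDop w x3))"

definition pR :: "('k::field) \<Rightarrow> 'k H2" where
  "pR w = sum3 Phiinv (\<lambda>x1 x2 x3. tens x1 (hprodl [x2, hbeta, Santi w x3]))"

definition qR :: "('k::field) \<Rightarrow> 'k H2" where
  "qR w = sum3 Phi (\<lambda>X1 X2 X3. tens X1 (hmult (Sinv w (hmult halpha X3)) X2))"

definition UE :: "('k::field) \<Rightarrow> 'k H2" where
  "UE w = sum2 (finvE w) (\<lambda>g1 g2. sum2 (qR w) (\<lambda>q1 q2.
      tens (hmult g1 (Santi w q2)) (hmult g2 (Santi w q1))))"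

definition VE :: "('k::field) \<Rightarrow> 'k H2" where
  "VE w = sum2 (fE w) (\<lambda>f1 f2. sum2 (pR w) (\<lambda>p1 p2.
      tens (Sinv w (hmult f2 p2)) (Sinv w (hmult f1 p1))))"

text \<open>modular element: the algebra map with mu(g) = -1, mu(x) = 0 (as stated in the context),
  in dual-basis coordinates: mu = P_1 - P_g\<close>
definition mu :: "('k::field) H1" where
  "mu = bas (0,0) - bas (1,0)"

definition left_cointegral :: "('k::field) \<Rightarrow> 'k H1 \<Rightarrow> bool" where
  "left_cointegral w l \<longleftrightarrow> (\<forall>h\<in>Hel.
     sum2 (VE w) (\<lambda>v1 v2. sum2 (Delta w h) (\<lambda>h1 h2. sum2 (UE w) (\<lambda>u1 u2.
        sc (ev l (hprodl [v2, h2, u2])) (hprodl [v1, h1, u1]))))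
     = sum3 Phiinv (\<lambda>x1 x2 x3. sc (ev mu x1 * ev l (hmult h (Santi w x2))) x3))"

end

theory Submission
  imports Defs
begin

(* The theorem is a finite computation in the 8-dimensional algebra H = H_pm(8), and the
   proof organises that computation so that every quasi-Hopf ingredient of the cointegral
   equation is evaluated once, in closed form.

   1. Coordinates: every element of H is written as a coordinate vector hvec a0..a3 b0..b3
      (standing for the sum of the a_b x^b and b_b g x^b); product, antipode and
      comultiplication are expressed in these coordinates.
   2. The reassociator and all derived elements (gamma, delta, f, f^-1, p_R, q_R, U, V) lie in
      tensor powers of the group algebra k[g]; these are represented by their four resp.
      eight coordinates (grp2, grp3), where products and Sweedler sums become explicit.
   3. With w^2 = -1 and 2 invertible we find Phi^-1 = Phi, U = g (x) 1 and V = 1 (x) 1, which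
      reduces the left cointegral condition to
         lambda(h_2) h_1 g = lambda(h) p_+ + lambda(hg) p_-      for all h in H.
   4. Testing this on the basis elements 1, g, g x, x^2, g x^2 and x^3 forces lambda to be a
      multiple of P_{x^3}; conversely P_{x^3} satisfies it for all h by a direct computation. *)

text \<open>Indices such as (1,0) stay numerals instead of becoming Suc 0, so coordinate rules keep matching.\<close>
declare One_nat_def [simp del]

section \<open>Coordinates on H\<close>

text \<open>The element a0 + a1 x + a2 x^2 + a3 x^3 + b0 g + b1 g x + b2 g x^2 + b3 g x^3 of H.\<close>
definition hvec :: "'k::field \<Rightarrow> 'k \<Rightarrow> 'k \<Rightarrow> 'k \<Rightarrow> 'k \<Rightarrow> 'k \<Rightarrow> 'k \<Rightarrow> 'k \<Rightarrow> 'k H1" where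
  "hvec a0 a1 a2 a3 b0 b1 b2 b3 = (\<lambda>p. if p = (0,0) then a0 else if p = (0,1) then a1 else
     if p = (0,2) then a2 else if p = (0,3) then a3 else if p = (1,0) then b0 else if p = (1,1) then b1
     else if p = (1,2) then b2 else if p = (1,3) then b3 else 0)"

abbreviation grp1 :: "'k::field \<Rightarrow> 'k \<Rightarrow> 'k H1" where
  "grp1 a b \<equiv> hvec a 0 0 0 b 0 0 0"

lemma Bset_eq: "Bset = {(0,0),(0,1),(0,2),(0,3),(1,0),(1,1),(1,2),(1,3)}"
  unfolding Bset_def by auto

lemma finite_Bset [simp]: "finite Bset"
  by (simp add: Bset_def)

lemma sum_Bset: "(\<Sum>p\<in>Bset. f p) = f(0,0)+f(0,1)+f(0,2)+f(0,3)+f(1,0)+f(1,1)+f(1,2)+f(1,3)"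
  by (simp add: Bset_eq add.assoc)

lemma sum_fun_apply: "finite A \<Longrightarrow> (sum F A) x = sum (\<lambda>a. F a x) A"
  by (induction A rule: finite_induct) auto

lemma hvec_apply [simp]:
  "hvec a0 a1 a2 a3 b0 b1 b2 b3 (0,0) = a0" "hvec a0 a1 a2 a3 b0 b1 b2 b3 (0,1) = a1"
  "hvec a0 a1 a2 a3 b0 b1 b2 b3 (0,2) = a2" "hvec a0 a1 a2 a3 b0 b1 b2 b3 (0,3) = a3"
  "hvec a0 a1 a2 a3 b0 b1 b2 b3 (1,0) = b0" "hvec a0 a1 a2 a3 b0 b1 b2 b3 (1,1) = b1"
  "hvec a0 a1 a2 a3 b0 b1 b2 b3 (1,2) = b2" "hvec a0 a1 a2 a3 b0 b1 b2 b3 (1,3) = b3"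
  by (simp_all add: hvec_def)

lemma hvec_outside: "p \<notin> Bset \<Longrightarrow> hvec a0 a1 a2 a3 b0 b1 b2 b3 p = 0"
  unfolding hvec_def Bset_eq by (simp only: insert_iff empty_iff de_Morgan_disj if_False)

lemma HelD: "h \<in> Hel \<Longrightarrow> p \<notin> Bset \<Longrightarrow> h p = 0"
  unfolding Hel_def by blast

lemma HelI: "(\<And>p. p \<notin> Bset \<Longrightarrow> h p = 0) \<Longrightarrow> h \<in> Hel"
  unfolding Hel_def by blast

lemma hvec_Hel [simp]: "hvec a0 a1 a2 a3 b0 b1 b2 b3 \<in> Hel"
  by (rule HelI, rule hvec_outside)

lemma Hel_eqI:
  assumes "f \<in> Hel" "g \<in> Hel" "f(0,0) = g(0,0)" "f(0,1) = g(0,1)" "f(0,2) = g(0,2)"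
    "f(0,3) = g(0,3)" "f(1,0) = g(1,0)" "f(1,1) = g(1,1)" "f(1,2) = g(1,2)" "f(1,3) = g(1,3)"
  shows "f = g"
proof
  fix p
  show "f p = g p"
  proof (cases "p \<in> Bset")
    case True
    then show ?thesis using assms by (auto simp: Bset_eq)
  qed (simp add: HelD assms(1,2))
qed

lemma Hel_hvec: "h \<in> Hel \<Longrightarrow> h = hvec (h(0,0)) (h(0,1)) (h(0,2)) (h(0,3)) (h(1,0)) (h(1,1)) (h(1,2)) (h(1,3))"
  by (rule Hel_eqI) simp_all

lemma hvec_eq_iff: "hvec a0 a1 a2 a3 b0 b1 b2 b3 = hvec c0 c1 c2 c3 d0 d1 d2 d3 \<longleftrightarrow>
   a0 = c0 \<and> a1 = c1 \<and> a2 = c2 \<and> a3 = c3 \<and> b0 = d0 \<and> b1 = d1 \<and> b2 = d2 \<and> b3 = d3"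
  by (metis hvec_apply)

lemma sc_apply: "sc c f x = c * f x"
  by (simp add: sc_def)

lemma hvec_add [simp]: "hvec a0 a1 a2 a3 b0 b1 b2 b3 + hvec c0 c1 c2 c3 d0 d1 d2 d3 =
   hvec (a0+c0) (a1+c1) (a2+c2) (a3+c3) (b0+d0) (b1+d1) (b2+d2) (b3+d3)"
  by (rule Hel_eqI) (simp_all add: HelI hvec_outside)

lemma hvec_diff [simp]: "hvec a0 a1 a2 a3 b0 b1 b2 b3 - hvec c0 c1 c2 c3 d0 d1 d2 d3 =
   hvec (a0-c0) (a1-c1) (a2-c2) (a3-c3) (b0-d0) (b1-d1) (b2-d2) (b3-d3)"
  by (rule Hel_eqI) (simp_all add: HelI hvec_outside)

lemma hvec_uminus [simp]: "- hvec a0 a1 a2 a3 b0 b1 b2 b3 =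
   hvec (-a0) (-a1) (-a2) (-a3) (-b0) (-b1) (-b2) (-b3)"
  by (rule Hel_eqI) (simp_all add: HelI hvec_outside)

lemma hvec_sc [simp]: "sc c (hvec a0 a1 a2 a3 b0 b1 b2 b3) =
   hvec (c*a0) (c*a1) (c*a2) (c*a3) (c*b0) (c*b1) (c*b2) (c*b3)"
  by (rule Hel_eqI) (simp_all add: sc_apply HelI hvec_outside)

lemma hvec_numeral [simp]: "numeral k * hvec a0 a1 a2 a3 b0 b1 b2 b3 = hvec (numeral k * a0)
   (numeral k * a1) (numeral k * a2) (numeral k * a3) (numeral k * b0) (numeral k * b1)
   (numeral k * b2) (numeral k * b3)"
  by (rule Hel_eqI) (simp_all add: HelI hvec_outside)

lemma bas_apply: "bas p q = (if q = p then 1 else 0)"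
  by (simp add: bas_def)

lemma bas_Hel [simp]: "p \<in> Bset \<Longrightarrow> bas p \<in> Hel"
  by (rule HelI) (auto simp add: bas_apply)

lemma bas_hvec [simp]:
  "bas (0,0) = hvec 1 0 0 0 0 0 0 0" "bas (0,1) = hvec 0 1 0 0 0 0 0 0"
  "bas (0,2) = hvec 0 0 1 0 0 0 0 0" "bas (0,3) = hvec 0 0 0 1 0 0 0 0"
  "bas (1,0) = hvec 0 0 0 0 1 0 0 0" "bas (1,1) = hvec 0 0 0 0 0 1 0 0"
  "bas (1,2) = hvec 0 0 0 0 0 0 1 0" "bas (1,3) = hvec 0 0 0 0 0 0 0 1"
  by (rule Hel_eqI; simp add: bas_apply Bset_eq)+

lemma consts_hvec [simp]: "hone = grp1 1 0" "hg = grp1 0 1" "hx = hvec 0 1 0 0 0 0 0 0"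
  "pplus = grp1 (1/2) (1/2)" "pminus = grp1 (1/2) (-1/2)"
  by (simp_all add: hone_def hg_def hx_def pplus_def pminus_def)

lemma ev_hvec [simp]: "ev l (hvec a0 a1 a2 a3 b0 b1 b2 b3) = l(0,0)*a0 + l(0,1)*a1 + l(0,2)*a2
   + l(0,3)*a3 + l(1,0)*b0 + l(1,1)*b1 + l(1,2)*b2 + l(1,3)*b3"
  by (simp add: ev_def sum_Bset)

section \<open>Multiplication and antipode in coordinates\<close>

lemma bprod_apply: "bprod p q r = (if snd p + snd q < 4 \<and> r = ((fst p + fst q) mod 2, snd p + snd q)
   then (-1) ^ (snd p * fst q) else 0)"
  by (simp add: bprod_def sc_apply bas_def)

lemma hmult_apply: "hmult u v q = (\<Sum>p\<in>Bset. \<Sum>p'\<in>Bset. u p * v p' * bprod p p' q)"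
  unfolding hmult_def by (simp add: sum_fun_apply sc_def)

lemma bprod_Hel: "bprod p q \<in> Hel"
  by (rule HelI) (auto simp: bprod_apply Bset_def)

lemma hmult_Hel [simp]: "hmult u v \<in> Hel"
  by (rule HelI) (simp add: hmult_apply HelD[OF bprod_Hel])

text \<open>The multiplication table of H: g x = - x g, g^2 = 1, x^4 = 0.\<close>
lemma hmult_hvec: "hmult (hvec a0 a1 a2 a3 b0 b1 b2 b3) (hvec c0 c1 c2 c3 d0 d1 d2 d3) =
  hvec (a0*c0 + b0*d0)
     (a0*c1 + a1*c0 + b0*d1 - b1*d0)
     (a0*c2 + a1*c1 + a2*c0 + b0*d2 - b1*d1 + b2*d0)
     (a0*c3 + a1*c2 + a2*c1 + a3*c0 + b0*d3 - b1*d2 + b2*d1 - b3*d0)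
     (a0*d0 + b0*c0)
     (a0*d1 - a1*d0 + b0*c1 + b1*c0)
     (a0*d2 - a1*d1 + a2*d0 + b0*c2 + b1*c1 + b2*c0)
     (a0*d3 - a1*d2 + a2*d1 - a3*d0 + b0*c3 + b1*c2 + b2*c1 + b3*c0)"
  by (rule Hel_eqI) (simp_all add: hmult_apply sum_Bset bprod_apply)

lemma hmult_one_left [simp]: "u \<in> Hel \<Longrightarrow> hmult (grp1 1 0) u = u"
  by (subst (1 2) Hel_hvec[of u], assumption+) (simp add: hmult_hvec)

lemma hmult_one_right [simp]: "u \<in> Hel \<Longrightarrow> hmult u (grp1 1 0) = u"
  by (subst (1 2) Hel_hvec[of u], assumption+) (simp add: hmult_hvec)

lemma hprodl3 [simp]: "hprodl [a,b,c] = hmult a (hmult b (hmult c hone))"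
  by (simp add: hprodl_def)

lemma hprodl4 [simp]: "hprodl [a,b,c,d] = hmult a (hmult b (hmult c (hmult d hone)))"
  by (simp add: hprodl_def)

lemma hpow_simps: "hpow u 0 = hone" "hpow u 1 = hmult u hone" "hpow u 2 = hmult u (hmult u hone)"
   "hpow u 3 = hmult u (hmult u (hmult u hone))"
  by (simp_all add: hpow_def numeral_eq_Suc One_nat_def)

text \<open>S(x) = sxa w x + sxb w g x; these two scalars govern the antipode on odd powers of x.\<close>
definition sxa :: "'k::field \<Rightarrow> 'k" where "sxa w = - (1/2) - w/2"
definition sxb :: "'k::field \<Rightarrow> 'k" where "sxb w = 1/2 - w/2"

lemma sxa_sxb_det:
  assumes "(2::'k::field) \<noteq> 0"
  shows "sxa w * sxa w - sxb w * sxb (w::'k) = w"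
proof -
  define c :: 'k where "c = 1/2"
  have sx: "sxa w = - c - w * c" "sxb w = c - w * c"
    by (simp_all add: sxa_def sxb_def c_def)
  have "sxa w * sxa w - sxb w * sxb w = w * (2 * c) * (2 * c)"
    unfolding sx by (simp add: algebra_simps)
  also have "2 * c = 1"
    using assms by (simp add: c_def)
  finally show ?thesis by simp
qed

lemma Santi_hvec: "Santi w (hvec a0 a1 a2 a3 b0 b1 b2 b3) =
   (let d = sxa w * sxa w - sxb w * sxb w in
   hvec a0 (a1 * sxa w - b1 * sxb w) (a2 * d) (a3 * (sxa w * d) - b3 * (sxb w * d))
      b0 (a1 * sxb w - b1 * sxa w) (b2 * d) (a3 * (sxb w * d) - b3 * (sxa w * d)))"
  unfolding Let_def
  apply (rule Hel_eqI)
  apply (simp_all add: Santi_def sum_Bset hpow_simps hmult_hvec Sx_def)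
  apply (simp_all add: sxa_def sxb_def algebra_simps)
  done

lemma Santi_Santi: "Santi w (Santi w (hvec a0 a1 a2 a3 b0 b1 b2 b3)) =
   (let d = sxa w * sxa w - sxb w * sxb w in
    hvec a0 (d*a1) (d^2*a2) (d^3*a3) b0 (d*b1) (d^2*b2) (d^3*b3))"
  by (simp add: Santi_hvec Let_def hvec_eq_iff algebra_simps power2_eq_square power3_eq_cube)

lemma Santi_inj:
  assumes two: "(2::'k::field) \<noteq> 0" and w: "(w::'k) \<noteq> 0"
    and h: "h \<in> Hel" and h': "h' \<in> Hel" and eq: "Santi w h = Santi w h'"
  shows "h = h'"
proof -
  have S2: "Santi w (Santi w u) =
      hvec (u(0,0)) (w*u(0,1)) (w^2*u(0,2)) (w^3*u(0,3)) (u(1,0)) (w*u(1,1)) (w^2*u(1,2)) (w^3*u(1,3))"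
    if "u \<in> Hel" for u
    by (subst (1) Hel_hvec[OF that]) (simp add: Santi_Santi sxa_sxb_det[OF two])
  have "Santi w (Santi w h) = Santi w (Santi w h')"
    using eq by simp
  then show ?thesis
    unfolding S2[OF h] S2[OF h'] using w by (intro Hel_eqI[OF h h']) (simp_all add: hvec_eq_iff)
qed

lemma Santi_grp [simp]: "Santi w (grp1 a b) = grp1 a b"
  by (simp add: Santi_hvec)

lemma Sinv_grp:
  assumes "(2::'k::field) \<noteq> 0" "(w::'k) \<noteq> 0"
  shows "Sinv w (grp1 a b) = grp1 a b"
  unfolding Sinv_def
  by (rule the_equality) (auto intro: Santi_inj[OF assms, where h' = "grp1 a b"])

lemma sc_add_left: "sc (a+b) X = sc a X + sc b X" by (rule ext) (simp add: sc_def distrib_right)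
lemma sc_sc: "sc a (sc b X) = sc (a*b) X" by (rule ext) (simp add: sc_def)
lemma sc_0 [simp]: "sc 0 X = 0" by (rule ext) (simp add: sc_def)
lemma sc_1 [simp]: "sc 1 X = X" by (rule ext) (simp add: sc_def)
lemma num_sc: "numeral k * (T::'a \<Rightarrow> 'k::field) = sc (numeral k) T"
  by (rule ext) (simp add: sc_apply)
lemma sc_sum_right: "finite A \<Longrightarrow> sc a (\<Sum>x\<in>A. f x) = (\<Sum>x\<in>A. sc a (f x))"
  by (rule ext) (simp add: sum_fun_apply sc_apply sum_distrib_left)

lemma sum2_add: "sum2 (S + T) F = sum2 S F + sum2 T F"
  by (simp add: sum2_def sc_add_left sum.distrib split_def)
lemma sum2_sc: "sum2 (sc c T) F = sc c (sum2 T F)"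
  by (simp add: sum2_def sc_sum_right sc_sc split_def sc_apply)
lemma sum3_add: "sum3 (S + T) F = sum3 S F + sum3 T F"
  by (simp add: sum3_def sc_add_left sum.distrib split_def)
lemma sum3_sc: "sum3 (sc c T) F = sc c (sum3 T F)"
  by (simp add: sum3_def sc_sum_right sc_sc split_def sc_apply)

lemma tens_apply [simp]: "tens u v (p,q) = u p * v q" by (simp add: tens_def)
lemma tens3_apply [simp]: "tens3 u v w (p,q,r) = u p * v q * w r" by (simp add: tens3_def)

lemma sum2_basis:
  assumes "p \<in> Bset" "q \<in> Bset"
  shows "sum2 (tens (bas p) (bas q)) F = F (bas p) (bas q)"
proof -
  have "sum2 (tens (bas p) (bas q)) F = (\<Sum>x\<in>Bset \<times> Bset. if x = (p,q) then F (bas p) (bas q) else 0)"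
    unfolding sum2_def by (rule sum.cong) (auto simp: bas_apply)
  also have "\<dots> = F (bas p) (bas q)" using assms by (simp add: sum.delta)
  finally show ?thesis .
qed

lemma sum3_basis:
  assumes "p \<in> Bset" "q \<in> Bset" "r \<in> Bset"
  shows "sum3 (tens3 (bas p) (bas q) (bas r)) F = F (bas p) (bas q) (bas r)"
proof -
  have "sum3 (tens3 (bas p) (bas q) (bas r)) F =
      (\<Sum>x\<in>Bset \<times> Bset \<times> Bset. if x = (p,q,r) then F (bas p) (bas q) (bas r) else 0)"
    unfolding sum3_def by (rule sum.cong) (auto simp: bas_apply)
  also have "\<dots> = F (bas p) (bas q) (bas r)" using assms by (simp add: sum.delta)
  finally show ?thesis .
qed

lemma sum2_cong:
  "(\<And>p q. p \<in> Bset \<Longrightarrow> q \<in> Bset \<Longrightarrow> F (bas p) (bas q) = G (bas p) (bas q)) \<Longrightarrow> sum2 T F = sum2 T G"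
  unfolding sum2_def by (rule sum.cong) auto

lemma sum3_cong:
  "(\<And>p q r. p \<in> Bset \<Longrightarrow> q \<in> Bset \<Longrightarrow> r \<in> Bset \<Longrightarrow> F (bas p) (bas q) (bas r) = G (bas p) (bas q) (bas r))
   \<Longrightarrow> sum3 T F = sum3 T G"
  unfolding sum3_def by (rule sum.cong) auto

lemma hmult2_apply: "hmult2 S T (x,y) = (\<Sum>(p,q)\<in>Bset \<times> Bset. \<Sum>(p',q')\<in>Bset \<times> Bset.
      S (p, q) * T (p', q') * (bprod p p' x * bprod q q' y))"
  unfolding hmult2_def by (simp add: sum_fun_apply Bset_def sc_apply split_def)

lemma hmult2_add_left: "hmult2 (S + S') T = hmult2 S T + hmult2 S' T"
  by (rule ext, clarsimp simp: hmult2_apply distrib_right sum.distrib split_def)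
lemma hmult2_add_right: "hmult2 S (T + T') = hmult2 S T + hmult2 S T'"
  by (rule ext, clarsimp simp: hmult2_apply distrib_left distrib_right sum.distrib split_def)
lemma hmult2_sc_left: "hmult2 (sc c S) T = sc c (hmult2 S T)"
  by (rule ext, clarsimp simp: hmult2_apply sc_apply sum_distrib_left split_def mult.assoc)
lemma hmult2_sc_right: "hmult2 S (sc c T) = sc c (hmult2 S T)"
  by (rule ext, clarsimp simp: hmult2_apply sc_apply sum_distrib_left split_def mult_ac)

lemma hmult2_numeral_left: "hmult2 (numeral k * (S::'k::field H2)) T = sc (numeral k) (hmult2 S T)"
  by (simp add: num_sc hmult2_sc_left)
lemma hmult2_numeral_right: "hmult2 (S::'k::field H2) (numeral k * T) = sc (numeral k) (hmult2 S T)"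
  by (simp add: num_sc hmult2_sc_right)

lemma hmult2_tens: "hmult2 (tens a b) (tens c d) = tens (hmult a c) (hmult b d)"
proof (rule ext, clarify)
  fix x y
  have "hmult2 (tens a b) (tens c d) (x,y) = (\<Sum>p\<in>Bset. \<Sum>q\<in>Bset. \<Sum>p'\<in>Bset. \<Sum>q'\<in>Bset.
      (a p * c p' * bprod p p' x) * (b q * d q' * bprod q q' y))"
    by (simp add: hmult2_apply sum.cartesian_product[symmetric] mult_ac)
  also have "\<dots> = hmult a c x * hmult b d y"
    by (simp add: hmult_apply sum_product)
  finally show "hmult2 (tens a b) (tens c d) (x,y) = tens (hmult a c) (hmult b d) (x,y)" by simp
qed

lemma hmult3_apply: "hmult3 S T (x,y,z) = (\<Sum>(p,q,r)\<in>Bset \<times> Bset \<times> Bset. \<Sum>(p',q',r')\<in>Bset \<times> Bset \<times> Bset.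
      S (p, q, r) * T (p', q', r') * (bprod p p' x * bprod q q' y * bprod r r' z))"
  unfolding hmult3_def by (simp add: sum_fun_apply Bset_def sc_apply split_def)

lemma hmult3_add_left: "hmult3 (S + S') T = hmult3 S T + hmult3 S' T"
  by (rule ext, clarsimp simp: hmult3_apply distrib_right sum.distrib split_def)
lemma hmult3_add_right: "hmult3 S (T + T') = hmult3 S T + hmult3 S T'"
  by (rule ext, clarsimp simp: hmult3_apply distrib_left distrib_right sum.distrib split_def)
lemma hmult3_diff_left: "hmult3 (S - S') T = hmult3 S T - hmult3 S' T"
  by (rule ext, clarsimp simp: hmult3_apply left_diff_distrib sum_subtractf split_def)
lemma hmult3_diff_right: "hmult3 S (T - T') = hmult3 S T - hmult3 S T'"
  by (rule ext, clarsimp simp: hmult3_apply right_diff_distrib left_diff_distrib sum_subtractf split_def)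
lemma hmult3_sc_left: "hmult3 (sc c S) T = sc c (hmult3 S T)"
  by (rule ext, clarsimp simp: hmult3_apply sc_apply sum_distrib_left split_def mult.assoc)
lemma hmult3_sc_right: "hmult3 S (sc c T) = sc c (hmult3 S T)"
  by (rule ext, clarsimp simp: hmult3_apply sc_apply sum_distrib_left split_def mult_ac)

lemma sum6_reorder: "(\<Sum>p\<in>A. \<Sum>q\<in>A. \<Sum>r\<in>A. \<Sum>p'\<in>A. \<Sum>q'\<in>A. \<Sum>r'\<in>A. f p q r p' q' r') =
   (\<Sum>p\<in>A. \<Sum>p'\<in>A. \<Sum>q\<in>A. \<Sum>q'\<in>A. \<Sum>r\<in>A. \<Sum>r'\<in>A. f p q r p' q' r')"
proof (rule sum.cong[OF refl])
  fix p
  have "(\<Sum>q\<in>A. \<Sum>r\<in>A. \<Sum>p'\<in>A. \<Sum>q'\<in>A. \<Sum>r'\<in>A. f p q r p' q' r') =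
     (\<Sum>q\<in>A. \<Sum>p'\<in>A. \<Sum>r\<in>A. \<Sum>q'\<in>A. \<Sum>r'\<in>A. f p q r p' q' r')"
    by (rule sum.cong[OF refl], rule sum.swap)
  also have "\<dots> = (\<Sum>p'\<in>A. \<Sum>q\<in>A. \<Sum>r\<in>A. \<Sum>q'\<in>A. \<Sum>r'\<in>A. f p q r p' q' r')"
    by (rule sum.swap)
  also have "\<dots> = (\<Sum>p'\<in>A. \<Sum>q\<in>A. \<Sum>q'\<in>A. \<Sum>r\<in>A. \<Sum>r'\<in>A. f p q r p' q' r')"
    by (rule sum.cong[OF refl], rule sum.cong[OF refl], rule sum.swap)
  finally show "(\<Sum>q\<in>A. \<Sum>r\<in>A. \<Sum>p'\<in>A. \<Sum>q'\<in>A. \<Sum>r'\<in>A. f p q r p' q' r') =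
     (\<Sum>p'\<in>A. \<Sum>q\<in>A. \<Sum>q'\<in>A. \<Sum>r\<in>A. \<Sum>r'\<in>A. f p q r p' q' r')" .
qed

lemma hmult3_tens3: "hmult3 (tens3 a b c) (tens3 d e f) = tens3 (hmult a d) (hmult b e) (hmult c f)"
proof (rule ext, clarify)
  fix x y z
  have "hmult3 (tens3 a b c) (tens3 d e f) (x,y,z) = (\<Sum>p\<in>Bset. \<Sum>q\<in>Bset. \<Sum>r\<in>Bset. \<Sum>p'\<in>Bset. \<Sum>q'\<in>Bset. \<Sum>r'\<in>Bset.
      (a p * d p' * bprod p p' x) * ((b q * e q' * bprod q q' y) * (c r * f r' * bprod r r' z)))"
    by (simp add: hmult3_apply sum.cartesian_product[symmetric] mult_ac)
  also have "\<dots> = (\<Sum>p\<in>Bset. \<Sum>p'\<in>Bset. \<Sum>q\<in>Bset. \<Sum>q'\<in>Bset. \<Sum>r\<in>Bset. \<Sum>r'\<in>Bset.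
      (a p * d p' * bprod p p' x) * ((b q * e q' * bprod q q' y) * (c r * f r' * bprod r r' z)))"
    by (rule sum6_reorder)
  also have "\<dots> = hmult a d x * (hmult b e y * hmult c f z)"
    unfolding hmult_apply by (simp only: sum_distrib_right, simp only: sum_distrib_left)
  finally show "hmult3 (tens3 a b c) (tens3 d e f) (x,y,z) = tens3 (hmult a d) (hmult b e) (hmult c f) (x,y,z)"
    by (simp add: mult.assoc)
qed

lemma H3elD: "y \<in> H3el \<Longrightarrow> p \<notin> Bset \<or> q \<notin> Bset \<or> r \<notin> Bset \<Longrightarrow> y (p,q,r) = 0"
  unfolding H3el_def by blast

lemma H3_decomp: "y \<in> H3el \<Longrightarrow> sum3 y (\<lambda>p q r. tens3 p q r) = y"
proof (rule ext, clarify)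
  fix x1 x2 x3 assume y: "y \<in> H3el"
  have "sum3 y (\<lambda>p q r. tens3 p q r) (x1,x2,x3) =
     (\<Sum>P\<in>Bset \<times> Bset \<times> Bset. if P = (x1,x2,x3) then y (x1,x2,x3) else 0)"
    unfolding sum3_def
    by (subst sum_fun_apply, simp) (rule sum.cong, auto simp: sc_apply bas_apply split: prod.splits)
  also have "\<dots> = y (x1,x2,x3)"
    using y by (auto simp: sum.delta H3elD)
  finally show "sum3 y (\<lambda>p q r. tens3 p q r) (x1,x2,x3) = y (x1,x2,x3)" .
qed

lemma hmult3_sum_right: "finite A \<Longrightarrow> hmult3 S (\<Sum>x\<in>A. f x) = (\<Sum>x\<in>A. hmult3 S (f x))"
proof (induction A rule: finite_induct)
  case empty
  show ?case by (simp only: sum.empty) (rule ext, clarify, simp add: hmult3_apply)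
next
  case (insert x F)
  then show ?case by (simp only: sum.insert[OF insert(1,2)] hmult3_add_right)
qed

lemma hmult3_sum3_right: "hmult3 S (sum3 y F) = sum3 y (\<lambda>p q r. hmult3 S (F p q r))"
  unfolding sum3_def by (simp add: hmult3_sum_right split_def hmult3_sc_right)

lemma hmult3_tens3_left:
  assumes "y \<in> H3el"
  shows "hmult3 (tens3 a b c) y = sum3 y (\<lambda>p q r. tens3 (hmult a p) (hmult b q) (hmult c r))"
proof -
  have "hmult3 (tens3 a b c) y = hmult3 (tens3 a b c) (sum3 y (\<lambda>p q r. tens3 p q r))"
    using H3_decomp[OF assms] by simp
  also have "\<dots> = sum3 y (\<lambda>p q r. tens3 (hmult a p) (hmult b q) (hmult c r))"
    by (simp add: hmult3_sum3_right hmult3_tens3)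
  finally show ?thesis .
qed

section \<open>Tensors over the group algebra k[g]\<close>

definition grp2 :: "'k::field \<Rightarrow> 'k \<Rightarrow> 'k \<Rightarrow> 'k \<Rightarrow> 'k H2" where
  "grp2 a b c d = sc a (tens (grp1 1 0) (grp1 1 0)) + sc b (tens (grp1 1 0) (grp1 0 1))
     + sc c (tens (grp1 0 1) (grp1 1 0)) + sc d (tens (grp1 0 1) (grp1 0 1))"

text \<open>The analogous element of k[g] (x) k[g] (x) k[g], coefficients in lexicographic order of
  the exponents of g.\<close>
definition grp3 :: "'k::field \<Rightarrow> 'k \<Rightarrow> 'k \<Rightarrow> 'k \<Rightarrow> 'k \<Rightarrow> 'k \<Rightarrow> 'k \<Rightarrow> 'k \<Rightarrow> 'k H3" where
  "grp3 a b c d e f g h =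
       sc a (tens3 (grp1 1 0) (grp1 1 0) (grp1 1 0)) + sc b (tens3 (grp1 1 0) (grp1 1 0) (grp1 0 1))
     + sc c (tens3 (grp1 1 0) (grp1 0 1) (grp1 1 0)) + sc d (tens3 (grp1 1 0) (grp1 0 1) (grp1 0 1))
     + sc e (tens3 (grp1 0 1) (grp1 1 0) (grp1 1 0)) + sc f (tens3 (grp1 0 1) (grp1 1 0) (grp1 0 1))
     + sc g (tens3 (grp1 0 1) (grp1 0 1) (grp1 1 0)) + sc h (tens3 (grp1 0 1) (grp1 0 1) (grp1 0 1))"

lemma grp1_apply: "grp1 a b x = (if x = (0,0) then a else if x = (1,0) then b else 0)"
  by (cases "x \<in> Bset") (auto simp: hvec_outside Bset_eq)

lemma grp2_apply: "grp2 a b c d (x,y) = (if x = (0,0) then (if y = (0,0) then a else if y = (1,0) then b else 0)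
   else if x = (1,0) then (if y = (0,0) then c else if y = (1,0) then d else 0) else 0)"
  by (simp add: grp2_def sc_apply grp1_apply)

lemma grp3_apply: "grp3 a b c d e f g h (x,y,z) = (if x = (0,0) then
     (if y = (0,0) then (if z = (0,0) then a else if z = (1,0) then b else 0)
      else if y = (1,0) then (if z = (0,0) then c else if z = (1,0) then d else 0) else 0)
   else if x = (1,0) then
     (if y = (0,0) then (if z = (0,0) then e else if z = (1,0) then f else 0)
      else if y = (1,0) then (if z = (0,0) then g else if z = (1,0) then h else 0) else 0)
   else 0)"
  by (simp add: grp3_def sc_apply grp1_apply)

lemma grp2_eq_iff: "grp2 a b c d = grp2 a' b' c' d' \<longleftrightarrow> a = a' \<and> b = b' \<and> c = c' \<and> d = d'"
  by (metis grp2_apply zero_neq_one prod.inject)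

lemma grp3_eq_iff: "grp3 a b c d e f g h = grp3 a' b' c' d' e' f' g' h' \<longleftrightarrow>
   a = a' \<and> b = b' \<and> c = c' \<and> d = d' \<and> e = e' \<and> f = f' \<and> g = g' \<and> h = h'"
  by (metis grp3_apply zero_neq_one prod.inject)

lemma grp3_H3el: "grp3 a b c d e f g h \<in> H3el"
  unfolding H3el_def by (auto simp: grp3_apply Bset_eq)

lemma tens_grp [simp]: "tens (grp1 a b) (grp1 c d) = grp2 (a*c) (a*d) (b*c) (b*d)"
  by (rule ext, clarify) (simp add: grp2_apply grp1_apply)

lemma tens3_grp [simp]: "tens3 (grp1 a b) (grp1 c d) (grp1 e f) =
   grp3 (a*c*e) (a*c*f) (a*d*e) (a*d*f) (b*c*e) (b*c*f) (b*d*e) (b*d*f)"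
  by (rule ext, clarify) (simp add: grp3_apply grp1_apply)

lemma grp2_add [simp]: "grp2 a b c d + grp2 a' b' c' d' = grp2 (a+a') (b+b') (c+c') (d+d')"
  by (rule ext, clarify) (simp add: grp2_apply)
lemma grp2_sc [simp]: "sc k (grp2 a b c d) = grp2 (k*a) (k*b) (k*c) (k*d)"
  by (rule ext, clarify) (simp add: grp2_apply sc_apply)
lemma grp3_add [simp]: "grp3 a b c d e f g h + grp3 a' b' c' d' e' f' g' h' =
   grp3 (a+a') (b+b') (c+c') (d+d') (e+e') (f+f') (g+g') (h+h')"
  by (rule ext, clarify) (simp add: grp3_apply)
lemma grp3_diff [simp]: "grp3 a b c d e f g h - grp3 a' b' c' d' e' f' g' h' =
   grp3 (a-a') (b-b') (c-c') (d-d') (e-e') (f-f') (g-g') (h-h')"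
  by (rule ext, clarify) (simp add: grp3_apply)
lemma grp3_sc [simp]: "sc k (grp3 a b c d e f g h) = grp3 (k*a) (k*b) (k*c) (k*d) (k*e) (k*f) (k*g) (k*h)"
  by (rule ext, clarify) (simp add: grp3_apply sc_apply)

lemma grp2_numeral [simp]: "numeral k * grp2 a b c d =
   grp2 (numeral k * a) (numeral k * b) (numeral k * c) (numeral k * d)"
  by (rule ext, clarify) (simp add: grp2_apply)

lemma sum2_grp2 [simp]: "sum2 (grp2 a b c d) F = sc a (F (grp1 1 0) (grp1 1 0)) + sc b (F (grp1 1 0) (grp1 0 1))
   + sc c (F (grp1 0 1) (grp1 1 0)) + sc d (F (grp1 0 1) (grp1 0 1))"
  using sum2_basis[of "(0,0)" "(0,0)" F] sum2_basis[of "(0,0)" "(1,0)" F]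
    sum2_basis[of "(1,0)" "(0,0)" F] sum2_basis[of "(1,0)" "(1,0)" F]
  unfolding grp2_def by (simp del: tens_grp add: sum2_add sum2_sc Bset_eq)

lemma sum3_grp3 [simp]: "sum3 (grp3 a b c d e f g h) F =
     sc a (F (grp1 1 0) (grp1 1 0) (grp1 1 0)) + sc b (F (grp1 1 0) (grp1 1 0) (grp1 0 1))
   + sc c (F (grp1 1 0) (grp1 0 1) (grp1 1 0)) + sc d (F (grp1 1 0) (grp1 0 1) (grp1 0 1))
   + sc e (F (grp1 0 1) (grp1 1 0) (grp1 1 0)) + sc f (F (grp1 0 1) (grp1 1 0) (grp1 0 1))
   + sc g (F (grp1 0 1) (grp1 0 1) (grp1 1 0)) + sc h (F (grp1 0 1) (grp1 0 1) (grp1 0 1))"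
  using sum3_basis[of "(0,0)" "(0,0)" "(0,0)" F] sum3_basis[of "(0,0)" "(0,0)" "(1,0)" F]
    sum3_basis[of "(0,0)" "(1,0)" "(0,0)" F] sum3_basis[of "(0,0)" "(1,0)" "(1,0)" F]
    sum3_basis[of "(1,0)" "(0,0)" "(0,0)" F] sum3_basis[of "(1,0)" "(0,0)" "(1,0)" F]
    sum3_basis[of "(1,0)" "(1,0)" "(0,0)" F] sum3_basis[of "(1,0)" "(1,0)" "(1,0)" F]
  unfolding grp3_def by (simp del: tens3_grp add: sum3_add sum3_sc Bset_eq)

text \<open>k[g] (x) k[g] is the group algebra of Z/2 x Z/2.\<close>
lemma hmult2_grp2 [simp]: "hmult2 (grp2 a b c d) (grp2 a' b' c' d') =
  grp2 (a*a' + b*b' + c*c' + d*d') (a*b' + b*a' + c*d' + d*c') (a*c' + c*a' + b*d' + d*b') (a*d' + d*a' + b*c' + c*b')"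
  unfolding grp2_def
  by (simp only: hmult2_add_left hmult2_add_right hmult2_sc_left hmult2_sc_right hmult2_tens hmult_hvec)
    (simp del: grp2_def add: grp2_eq_iff)

text \<open>k[g] (x) k[g] (x) k[g] is the group algebra of (Z/2)^3.\<close>
lemma hmult3_grp3: "hmult3 (grp3 a b c d e f g h) (grp3 a' b' c' d' e' f' g' h') = grp3
  (a*a' + b*b' + c*c' + d*d' + e*e' + f*f' + g*g' + h*h')
  (a*b' + b*a' + c*d' + d*c' + e*f' + f*e' + g*h' + h*g')
  (a*c' + c*a' + b*d' + d*b' + e*g' + g*e' + f*h' + h*f')
  (a*d' + d*a' + b*c' + c*b' + e*h' + h*e' + f*g' + g*f')
  (a*e' + e*a' + b*f' + f*b' + c*g' + g*c' + d*h' + h*d')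
  (a*f' + f*a' + b*e' + e*b' + c*h' + h*c' + d*g' + g*d')
  (a*g' + g*a' + b*h' + h*b' + c*e' + e*c' + d*f' + f*d')
  (a*h' + h*a' + b*g' + g*b' + c*f' + f*c' + d*e' + e*d')"
  unfolding grp3_def
  by (simp only: hmult3_add_left hmult3_add_right hmult3_sc_left hmult3_sc_right hmult3_tens3 hmult_hvec)
    (simp add: grp3_eq_iff)

lemma hpow2_simps: "hpow2 u 0 = hone2" "hpow2 u 1 = hmult2 u hone2" "hpow2 u 2 = hmult2 u (hmult2 u hone2)"
   "hpow2 u 3 = hmult2 u (hmult2 u (hmult2 u hone2))"
  by (simp_all add: hpow2_def numeral_eq_Suc One_nat_def)

lemma Delta_bas: "p \<in> Bset \<Longrightarrow> Delta w (bas p) = hmult2 (hpow2 Dg (fst p)) (hpow2 (Dx w) (snd p))"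
proof -
  assume p: "p \<in> Bset"
  have "Delta w (bas p) = (\<Sum>q\<in>Bset. if q = p then hmult2 (hpow2 Dg (fst p)) (hpow2 (Dx w) (snd p)) else 0)"
    unfolding Delta_def by (rule sum.cong) (auto simp: bas_apply)
  then show ?thesis using p by (simp add: sum.delta)
qed

lemma Delta_lin: "Delta w h = (\<Sum>p\<in>Bset. sc (h p) (Delta w (bas p)))"
  unfolding Delta_def[of w h] by (rule sum.cong) (simp_all add: Delta_bas)

lemma Delta_grp [simp]: "Delta w (grp1 a b) = grp2 a 0 0 b"
proof -
  have "Delta w (grp1 1 0) = grp2 1 0 0 0" "Delta w (grp1 0 1) = grp2 0 0 0 1"
    using Delta_bas[of "(0,0)" w] Delta_bas[of "(1,0)" w]
    by (simp_all add: Bset_eq hpow2_simps hone2_def Dg_def)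
  then show ?thesis by (subst Delta_lin) (simp add: sum_Bset)
qed

lemma Delta_bas_hvec:
  "Delta w (hvec 0 1 0 0 0 0 0 0) = hmult2 (hpow2 Dg 0) (hpow2 (Dx w) 1)"
  "Delta w (hvec 0 0 1 0 0 0 0 0) = hmult2 (hpow2 Dg 0) (hpow2 (Dx w) 2)"
  "Delta w (hvec 0 0 0 1 0 0 0 0) = hmult2 (hpow2 Dg 0) (hpow2 (Dx w) 3)"
  "Delta w (hvec 0 0 0 0 0 1 0 0) = hmult2 (hpow2 Dg 1) (hpow2 (Dx w) 1)"
  "Delta w (hvec 0 0 0 0 0 0 1 0) = hmult2 (hpow2 Dg 1) (hpow2 (Dx w) 2)"
  "Delta w (hvec 0 0 0 0 0 0 0 1) = hmult2 (hpow2 Dg 1) (hpow2 (Dx w) 3)"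
  using Delta_bas[of "(0,1)" w] Delta_bas[of "(0,2)" w] Delta_bas[of "(0,3)" w]
    Delta_bas[of "(1,1)" w] Delta_bas[of "(1,2)" w] Delta_bas[of "(1,3)" w]
  by (simp_all only: Bset_eq bas_hvec insert_iff prod.inject fst_conv snd_conv simp_thms One_nat_def[symmetric])

text \<open>lambda(T^2) T^1 g for a tensor T in H (x) H: the left-hand side of the cointegral equation
  once U = g (x) 1 and V = 1 (x) 1 are inserted.\<close>
definition coint_lhs :: "'k::field H1 \<Rightarrow> 'k H2 \<Rightarrow> 'k H1" where
  "coint_lhs l T = sum2 T (\<lambda>h1 h2. sc (ev l h2) (hmult h1 hg))"

lemma coint_lhs_add [simp]: "coint_lhs l (S + T) = coint_lhs l S + coint_lhs l T"
  by (simp add: coint_lhs_def sum2_add)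
lemma coint_lhs_sc [simp]: "coint_lhs l (sc c T) = sc c (coint_lhs l T)"
  by (simp add: coint_lhs_def sum2_sc)
lemma coint_lhs_numeral [simp]: "coint_lhs l (numeral k * T) = sc (numeral k) (coint_lhs l T)"
  by (simp add: num_sc)

lemma coint_lhs_tens [simp]: "coint_lhs l (tens (hvec a0 a1 a2 a3 b0 b1 b2 b3) (hvec c0 c1 c2 c3 d0 d1 d2 d3)) =
   sc (ev l (hvec c0 c1 c2 c3 d0 d1 d2 d3)) (hmult (hvec a0 a1 a2 a3 b0 b1 b2 b3) hg)"
  by (simp add: coint_lhs_def sum2_def Bset_eq hmult_hvec) (simp add: hvec_eq_iff algebra_simps)

lemma coint_lhs_grp2 [simp]: "coint_lhs l (grp2 a b c d) =
   grp1 (c * l(0,0) + d * l(1,0)) (a * l(0,0) + b * l(1,0))"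
  unfolding coint_lhs_def by (simp add: hmult_hvec algebra_simps)

section \<open>The structure elements for w^2 = -1\<close>

locale square_root_of_minus_one =
  fixes w :: "'k::field"
  assumes two: "(2::'k) \<noteq> 0" and ww: "w * w = -1"
begin

lemmas two_nonzero [simp] = two

text \<open>All the powers of two that occur as denominators are then nonzero.\<close>
lemma numeral_Bit0_nonzero [simp]: "(numeral n::'k) \<noteq> 0 \<Longrightarrow> (numeral (Num.Bit0 n)::'k) \<noteq> 0"
  by (metis mult_2 numeral_Bit0 no_zero_divisors two)

lemma w_nonzero [simp]: "w \<noteq> 0"
  using ww by auto

text \<open>S^-1 is the identity on k[g], which is all that is needed of it.\<close>
lemmas Sinv_grp_w [simp] = Sinv_grp[OF two w_nonzero]

lemma Phi_grp3: "(Phi::'k H3) = grp3 (3/4) (1/4) (1/4) (-1/4) (1/4) (-1/4) (-1/4) (1/4)"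
  by (simp add: Phi_def hone3_def grp3_eq_iff)

lemma pminus_idem: "(u::'k H1) \<in> Hel \<Longrightarrow> hmult pminus (hmult pminus u) = hmult pminus u"
  by (subst (1 2) Hel_hvec[of u], assumption+) (simp add: hmult_hvec hvec_eq_iff field_simps)

text \<open>Phi is its own inverse: Phi = 1 - 2E with E = p_- (x) p_- (x) p_- idempotent, and left
  multiplication by E is idempotent even on tensors outside the group algebra, so any right
  inverse y of Phi satisfies E y = -E and hence y = 1 - 2E.\<close>
lemma Phiinv_eq: "(Phiinv::'k H3) = Phi"
proof -
  define E :: "'k H3" where "E = tens3 pminus pminus pminus"
  have PhiE: "Phi = hone3 - sc 2 E" unfolding Phi_def E_def ..
  have PP: "hmult3 (Phi::'k H3) Phi = hone3"
    unfolding Phi_grp3 by (simp add: hmult3_grp3 hone3_def grp3_eq_iff field_simps)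
  have uniq: "y = Phi" if y: "(y::'k H3) \<in> H3el" and py: "hmult3 Phi y = hone3" for y
  proof -
    have one_y: "hmult3 hone3 y = y"
      unfolding hone3_def hmult3_tens3_left[OF y]
      by (subst H3_decomp[OF y, symmetric], rule sum3_cong) simp
    have EE_y: "hmult3 E (hmult3 E y) = hmult3 E y"
      unfolding E_def hmult3_tens3_left[OF y]
      by (simp only: hmult3_sum3_right hmult3_tens3, rule sum3_cong) (simp only: pminus_idem bas_Hel)
    have E_one: "hmult3 E hone3 = E"
      unfolding E_def hone3_def by (simp add: hmult3_grp3)
    have 1: "y - sc 2 (hmult3 E y) = hone3"
      using py one_y by (simp add: PhiE hmult3_diff_left hmult3_sc_left)
    then have "hmult3 E (y - sc 2 (hmult3 E y)) = hmult3 E hone3" by simp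
    then have 2: "hmult3 E y - sc 2 (hmult3 E y) = E"
      by (simp add: hmult3_diff_right hmult3_sc_right EE_y E_one)
    show "y = Phi"
    proof
      fix P
      have "y P - 2 * hmult3 E y P = hone3 P" using fun_cong[OF 1, of P] by (simp add: sc_apply)
      moreover have "hmult3 E y P - 2 * hmult3 E y P = E P" using fun_cong[OF 2, of P] by (simp add: sc_apply)
      then have "- hmult3 E y P = E P" by (simp add: algebra_simps)
      then have "hmult3 E y P = - E P" by (metis minus_minus)
      ultimately show "y P = Phi P" by (simp add: PhiE sc_apply algebra_simps)
    qed
  qed
  show ?thesis
    unfolding Phiinv_def
    by (rule the_equality) (use PP uniq in \<open>auto simp: Phi_grp3 grp3_H3el\<close>)
qed

lemma gammaE_eq: "gammaE w = grp2 (-1/2) (1/2) (1/2) (1/2)"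
  unfolding gammaE_def Phiinv_eq Phi_grp3
  by (simp add: hmult_hvec halpha_def hbeta_def) (simp add: grp2_eq_iff field_simps)

lemma deltaE_eq: "deltaE w = grp2 (1/2) (1/2) (1/2) (-1/2)"
  unfolding deltaE_def Phiinv_eq Phi_grp3
  by (simp add: hmult_hvec halpha_def hbeta_def) (simp add: grp2_eq_iff field_simps)

lemma fE_eq: "fE w = grp2 (1/2) (1/2) (1/2) (-1/2)"
  unfolding fE_def Phiinv_eq Phi_grp3 SSDop_def gammaE_eq
  by (simp add: hmult_hvec halpha_def hbeta_def) (simp add: grp2_eq_iff field_simps)

lemma finvE_eq: "finvE w = grp2 (1/2) (1/2) (1/2) (-1/2)"
  unfolding finvE_def Phiinv_eq Phi_grp3 SSDop_def deltaE_eq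
  by (simp add: hmult_hvec halpha_def hbeta_def) (simp add: grp2_eq_iff field_simps)

lemma pR_eq: "pR w = grp2 (1/2) (1/2) (1/2) (-1/2)"
  unfolding pR_def Phiinv_eq Phi_grp3
  by (simp add: hmult_hvec halpha_def hbeta_def) (simp add: grp2_eq_iff field_simps)

lemma qR_eq: "qR w = grp2 (1/2) (1/2) (-1/2) (1/2)"
  unfolding qR_def Phi_grp3
  by (simp add: hmult_hvec halpha_def hbeta_def) (simp add: grp2_eq_iff field_simps)

lemma UE_eq: "UE w = grp2 0 0 1 0"
  unfolding UE_def finvE_eq qR_eq by (simp add: hmult_hvec)

lemma VE_eq: "VE w = grp2 1 0 0 0"
  unfolding VE_def fE_eq pR_eq by (simp add: hmult_hvec)

lemma cointegral_lhs_eq: "h \<in> Hel \<Longrightarrow>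
   sum2 (VE w) (\<lambda>v1 v2. sum2 (Delta w h) (\<lambda>h1 h2. sum2 (UE w) (\<lambda>u1 u2.
      sc (ev l (hprodl [v2, h2, u2])) (hprodl [v1, h1, u1])))) = coint_lhs l (Delta w h)"
  unfolding VE_eq UE_eq coint_lhs_def
  by (simp, rule sum2_cong, simp add: hmult_hvec)

text \<open>The right-hand side mu(x^1) lambda(h S(x^2)) x^3: since Phi^-1 = Phi lies in k[g]^(x)3 and
  mu(g) = -1, it collapses to lambda(h) p_+ + lambda(hg) p_-.\<close>
lemma cointegral_rhs_eq: "h \<in> Hel \<Longrightarrow>
   sum3 Phiinv (\<lambda>x1 x2 x3. sc (ev mu x1 * ev l (hmult h (Santi w x2))) x3)
     = sc (ev l h) pplus + sc (ev l (hmult h hg)) pminus"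
  unfolding Phiinv_eq Phi_grp3 mu_def
  by (simp only: sum3_grp3 Santi_grp bas_hvec hvec_diff ev_hvec hmult_one_right hvec_apply consts_hvec)
    (simp add: hvec_eq_iff field_simps)

lemma left_cointegral_iff: "left_cointegral w l \<longleftrightarrow>
   (\<forall>h\<in>Hel. coint_lhs l (Delta w h) = sc (ev l h) pplus + sc (ev l (hmult h hg)) pminus)"
  unfolding left_cointegral_def using cointegral_lhs_eq cointegral_rhs_eq by auto

text \<open>The rewrite rules that expand Delta(g^a x^b) = Delta(g)^a Delta(x)^b into pure tensors.\<close>
lemmas Delta_expand = Delta_bas_hvec hpow2_simps Dx_def Dg_def hone2_def
  hmult2_add_left hmult2_add_right hmult2_sc_left hmult2_sc_right
  hmult2_numeral_left hmult2_numeral_right hmult2_tens hmult_hvec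

lemma w_powers: "w^2 = -1" "w^3 = -w"
  using ww by (simp_all add: power2_eq_square power3_eq_cube)

lemma w_ne_one: "w \<noteq> 1"
proof
  assume "w = 1"
  then have "(1::'k) + 1 = 0" using ww by simp
  then show False using two by simp
qed

text \<open>A left cointegral vanishes on every basis element except x^3: testing the reduced equation
  on h = 1, g, g x, x^2, g x^2 and x^3 kills the other seven coordinates of lambda.\<close>
lemma left_cointegral_only_x3:
  assumes l: "l \<in> Hel" and lc: "left_cointegral w l"
  shows "l = hvec 0 0 0 (l(0,3)) 0 0 0 0"
proof -
  have test: "coint_lhs l (Delta w h) = sc (ev l h) pplus + sc (ev l (hmult h hg)) pminus"
    if "h \<in> Hel" for h
    using lc that unfolding left_cointegral_iff by blast
  have "l(1,0) + l(0,0) = 0"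
    using test[of "hvec 1 0 0 0 0 0 0 0"] by (simp add: hmult_hvec hvec_eq_iff) (simp add: field_simps)
  moreover have "l(1,0) = l(0,0)"
    using test[of "hvec 0 0 0 0 1 0 0 0"] by (simp add: hmult_hvec hvec_eq_iff)
  ultimately have g0: "l(0,0) = 0" "l(1,0) = 0"
    by simp_all
  have x1: "l(0,1) = 0"
    using test[of "hvec 0 0 0 0 0 1 0 0"] by (simp del: tens_grp add: Delta_expand hvec_eq_iff)
  have x2: "l(0,2) = 0" "l(1,2) = 0"
    using test[of "hvec 0 0 1 0 0 0 0 0"] test[of "hvec 0 0 0 0 0 0 1 0"]
    by (simp_all del: tens_grp add: Delta_expand hvec_eq_iff w_powers)
  have gx: "l(1,1) = 0"
    using test[of "hvec 0 0 1 0 0 0 0 0"] x1 w_ne_one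
    by (simp del: tens_grp add: Delta_expand hvec_eq_iff w_powers)
  have gx3: "l(1,3) = 0"
    using test[of "hvec 0 0 0 1 0 0 0 0"]
    by (simp del: tens_grp add: Delta_expand hvec_eq_iff) (simp add: field_simps w_powers)
  show ?thesis
    using g0 x1 x2 gx gx3 by (subst Hel_hvec[OF l]) simp
qed

lemma P_x3_left_cointegral: "left_cointegral w (hvec 0 0 0 c 0 0 0 0)"
  unfolding left_cointegral_iff
proof
  fix h :: "'k H1" assume "h \<in> Hel"
  then obtain a0 a1 a2 a3 b0 b1 b2 b3 where h: "h = hvec a0 a1 a2 a3 b0 b1 b2 b3"
    using Hel_hvec by blast
  show "coint_lhs (hvec 0 0 0 c 0 0 0 0) (Delta w h) =
      sc (ev (hvec 0 0 0 c 0 0 0 0) h) pplus + sc (ev (hvec 0 0 0 c 0 0 0 0) (hmult h hg)) pminus"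
    unfolding h Delta_lin[of w "hvec a0 a1 a2 a3 b0 b1 b2 b3"]
    by (simp del: tens_grp add: sum_Bset Delta_expand) (simp add: hvec_eq_iff field_simps)
qed

end

lemma primitive_fourth_root:
  fixes i :: "'k::field"
  assumes "i ^ 4 = 1" "i ^ 2 \<noteq> 1"
  shows "i * i = -1" "(2::'k) \<noteq> 0"
proof -
  have "(i^2 - 1) * (i^2 + 1) = i^4 - 1"
    by (simp add: algebra_simps power2_eq_square power4_eq_xxxx)
  then have "i^2 + 1 = 0" using assms by simp
  then show ii: "i * i = -1" by (simp add: power2_eq_square eq_neg_iff_add_eq_0)
  show "(2::'k) \<noteq> 0"
  proof
    assume "(2::'k) = 0"
    then have "(1::'k) = -1" by (simp add: eq_neg_iff_add_eq_0)
    then show False using assms(2) ii by (simp add: power2_eq_square)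
  qed
qed

theorem mainTheorem16:
  fixes i s :: "'k::field"
  assumes prim4: "i ^ 4 = 1" "i ^ 2 \<noteq> 1"
    and sign: "s = 1 \<or> s = -1"
  shows "{l \<in> Hel. left_cointegral (s * i) l} = {sc c (bas (0,3)) | c. True}"
proof -
  have ii: "i * i = -1" and two: "(2::'k) \<noteq> 0"
    using primitive_fourth_root[OF prim4] by simp_all
  have ww: "(s * i) * (s * i) = -1"
    using sign ii by auto
  interpret square_root_of_minus_one "s * i"
    using two ww by unfold_locales
  have P_x3: "sc c (bas (0,3)) = (hvec 0 0 0 c 0 0 0 0 :: 'k H1)" for c
    by simp
  show ?thesis
  proof (intro set_eqI iffI)
    fix l :: "'k H1" assume "l \<in> {l \<in> Hel. left_cointegral (s * i) l}"
    then have "l \<in> Hel" and "left_cointegral (s * i) l" by simp_all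
    then have "l = sc (l(0,3)) (bas (0,3))"
      unfolding P_x3 by (rule left_cointegral_only_x3)
    then show "l \<in> {sc c (bas (0,3)) | c. True}" by blast
  next
    fix l :: "'k H1" assume "l \<in> {sc c (bas (0,3)) | c. True}"
    then obtain c where "l = sc c (bas (0,3))" by blast
    then show "l \<in> {l \<in> Hel. left_cointegral (s * i) l}"
      unfolding P_x3 using P_x3_left_cointegral by simp
  qed
qed

end
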